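(* Consider a sequence of local public good games as described in the context with number of players $n\to\infty$, and suppose Assumption 1 holds. Let $\omega>0$ be a scalar such that $w_i\le\omega$ for all players $i$ in all games of the sequence. Then for every choice of sociable Nash equilibria $(x^*,y^*,g^* )$ of these games, the size of the core satisfies $\lim_{n\to\infty}|\mathcal C(g^* )|/n=0$.
   Context: There is a finite set of players $N=\{1,\dots,n\}$. Each player $i$ chooses a public good provision $x_i\ge 0$, a private good consumption $y_i\ge 0$, and links $g_i=(g_{i1},\dots,g_{in})\in\{0,1\}^n$ with $g_{ii}=0$; $g_{ij}=1$ means $i$ links to $j$. Let $\eta_i(g)=|\{j:g_{ij}=1\}|$. Each link costs its sponsor $k>0$ (fixed along the sequence). Player $i$'s spillovers are $\bar x_{-i}=\sum_{j}g_{ij}x_j$ and her public good consumption is $\bar x_i=x_i+\bar x_{-i}$. Player $i$ maximizes $U_i(\bar x_i,y_i)$ subject to $x_i+p_iy_i+\eta_i(g)k=w_i$, where $w_i>0$, $p_i>0$, and $U_i$ is twice continuously differentiable, strictly concave and increasing in both arguments. The Engel curve $\gamma_i$ gives, for income $W$, the public good consumption $\bar x$ maximizing $U_i(\bar x,y)$ subject to $\bar x+p_iy=W$. Assumption 1: each $\gamma_i$ is continuously differentiable with $\gamma_i'\in[0,1]$. A Nash equilibrium is a profile in which each player's strategy solves her maximization problem given the others'; it is sociable if any player who is indifferent between establishing a link or not establishes it. Under Assumption 1, the network of a non-empty sociable equilibrium is a core-periphery graph: players split into a periphery $\mathcal P$ and a core $\mathcal C$ with no links among periphery players, all core players mutually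 linked in both directions, and every periphery player linking to some core player; the core $\mathcal C(g^* )$ consists of the players providing more than $k$ (it is empty if the network is empty). *)

theory Defs
  imports "HOL-Analysis.Analysis"
begin

text \<open>Players of an n-player game are 0,...,n-1. Utilities are functions of
  (public good consumption, private good consumption).\<close>

definition strictly_concave_on :: "(real \<times> real) set \<Rightarrow> (real \<times> real \<Rightarrow> real) \<Rightarrow> bool" where
  "strictly_concave_on S f \<longleftrightarrow> convex S \<and>
     (\<forall>a\<in>S. \<forall>b\<in>S. \<forall>t::real. a \<noteq> b \<and> 0 < t \<and> t < 1 \<longrightarrow>
        f ((1 - t) *\<^sub>R a + t *\<^sub>R b) > (1 - t) * f a + t * f b)"

definition C2_on :: "(real \<times> real) set \<Rightarrow> (real \<times> real \<Rightarrow> real) \<Rightarrow> bool" where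
  "C2_on S f \<longleftrightarrow> (\<exists>Df :: real \<times> real \<Rightarrow> (real \<times> real) \<Rightarrow>\<^sub>L real.
       \<exists>D2f :: real \<times> real \<Rightarrow> (real \<times> real) \<Rightarrow>\<^sub>L ((real \<times> real) \<Rightarrow>\<^sub>L real).
       (\<forall>z\<in>S. (f has_derivative blinfun_apply (Df z)) (at z)) \<and>
       (\<forall>z\<in>S. (Df has_derivative blinfun_apply (D2f z)) (at z)) \<and>
       continuous_on S D2f)"

definition nonneg_quadrant :: "(real \<times> real) set" where
  "nonneg_quadrant = {z. 0 \<le> fst z \<and> 0 \<le> snd z}"

definition pos_quadrant :: "(real \<times> real) set" where
  "pos_quadrant = {z. 0 < fst z \<and> 0 < snd z}"

definition utility_ok :: "(real \<Rightarrow> real \<Rightarrow> real) \<Rightarrow> bool" where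
  "utility_ok U \<longleftrightarrow>
     C2_on pos_quadrant (\<lambda>z. U (fst z) (snd z)) \<and>
     continuous_on nonneg_quadrant (\<lambda>z. U (fst z) (snd z)) \<and>
     strictly_concave_on nonneg_quadrant (\<lambda>z. U (fst z) (snd z)) \<and>
     (\<forall>a a' b. 0 \<le> a \<and> a < a' \<and> 0 \<le> b \<longrightarrow> U a b < U a' b) \<and>
     (\<forall>a b b'. 0 \<le> a \<and> 0 \<le> b \<and> b < b' \<longrightarrow> U a b < U a b')"

definition engel :: "(real \<Rightarrow> real \<Rightarrow> real) \<Rightarrow> real \<Rightarrow> real \<Rightarrow> real" where
  "engel U p W = (THE xb. 0 \<le> xb \<and> 0 \<le> (W - xb) / p \<and>
      (\<forall>xb' y'. 0 \<le> xb' \<and> 0 \<le> y' \<and> xb' + p * y' = W \<longrightarrow> U xb' y' \<le> U xb ((W - xb) / p)))"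

definition assumption1 :: "(real \<Rightarrow> real \<Rightarrow> real) \<Rightarrow> real \<Rightarrow> bool" where
  "assumption1 U p \<longleftrightarrow> (\<exists>d. continuous_on {0<..} d \<and>
      (\<forall>W>0. (engel U p has_real_derivative d W) (at W) \<and> 0 \<le> d W \<and> d W \<le> 1))"

definition num_links :: "nat \<Rightarrow> (nat \<Rightarrow> bool) \<Rightarrow> nat" where
  "num_links n gi = card {j. j < n \<and> gi j}"

definition feasible ::
  "nat \<Rightarrow> (nat \<Rightarrow> real) \<Rightarrow> (nat \<Rightarrow> real) \<Rightarrow> real \<Rightarrow> nat \<Rightarrow> real \<Rightarrow> real \<Rightarrow> (nat \<Rightarrow> bool) \<Rightarrow> bool" where
  "feasible n w p k i xi yi gi \<longleftrightarrow> 0 \<le> xi \<and> 0 \<le> yi \<and> \<not> gi i \<and> (\<forall>j. gi j \<longrightarrow> j < n) \<and>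
     xi + p i * yi + real (num_links n gi) * k = w i"

definition payoff ::
  "nat \<Rightarrow> (nat \<Rightarrow> real \<Rightarrow> real \<Rightarrow> real) \<Rightarrow> (nat \<Rightarrow> real) \<Rightarrow> nat \<Rightarrow> real \<Rightarrow> real \<Rightarrow> (nat \<Rightarrow> bool) \<Rightarrow> real" where
  "payoff n U x i xi yi gi = U i (xi + (\<Sum>j\<in>{j. j < n \<and> gi j}. x j)) yi"

definition nash_eq ::
  "nat \<Rightarrow> (nat \<Rightarrow> real \<Rightarrow> real \<Rightarrow> real) \<Rightarrow> (nat \<Rightarrow> real) \<Rightarrow> (nat \<Rightarrow> real) \<Rightarrow> real \<Rightarrow>
   (nat \<Rightarrow> real) \<Rightarrow> (nat \<Rightarrow> real) \<Rightarrow> (nat \<Rightarrow> nat \<Rightarrow> bool) \<Rightarrow> bool" where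
  "nash_eq n U w p k x y g \<longleftrightarrow> (\<forall>i<n.
     feasible n w p k i (x i) (y i) (g i) \<and>
     (\<forall>xi yi gi. feasible n w p k i xi yi gi \<longrightarrow>
        payoff n U x i xi yi gi \<le> payoff n U x i (x i) (y i) (g i)))"

text \<open>Sociable: if player i can add the link to j (keeping her other links,
  re-optimizing provision and private consumption) and be at least as well off,
  i.e. she is indifferent about establishing the link, then she links to j.\<close>
definition sociable_nash_eq ::
  "nat \<Rightarrow> (nat \<Rightarrow> real \<Rightarrow> real \<Rightarrow> real) \<Rightarrow> (nat \<Rightarrow> real) \<Rightarrow> (nat \<Rightarrow> real) \<Rightarrow> real \<Rightarrow>
   (nat \<Rightarrow> real) \<Rightarrow> (nat \<Rightarrow> real) \<Rightarrow> (nat \<Rightarrow> nat \<Rightarrow> bool) \<Rightarrow> bool" where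
  "sociable_nash_eq n U w p k x y g \<longleftrightarrow> nash_eq n U w p k x y g \<and>
     (\<forall>i<n. \<forall>j<n. j \<noteq> i \<longrightarrow>
        (\<exists>xi yi. feasible n w p k i xi yi ((g i)(j := True)) \<and>
            payoff n U x i xi yi ((g i)(j := True)) \<ge> payoff n U x i (x i) (y i) (g i))
        \<longrightarrow> g i j)"

definition core :: "nat \<Rightarrow> real \<Rightarrow> (nat \<Rightarrow> real) \<Rightarrow> (nat \<Rightarrow> nat \<Rightarrow> bool) \<Rightarrow> nat set" where
  "core n k x g = (if (\<forall>i<n. \<forall>j<n. \<not> g i j) then {} else {i. i < n \<and> x i > k})"

end

theory Submission
  imports Defs
begin

text \<open>A player providing at least k who does not link to a player j with x j > k could
  sponsor that link and pay for it by cutting her own provision by k: her public good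
  consumption rises by x j - k > 0. So in equilibrium every core player links to all
  other core players, and her budget pays for a provision above k plus card C - 1
  links; hence card C * k < w i \<le> \<omega>. The core thus stays bounded while the number of
  players tends to infinity.\<close>

lemma linked_set_add_link:
  "j < n \<Longrightarrow> {l. l < n \<and> (gi(j := True)) l} = insert j {l. l < n \<and> gi l}"
  by auto

lemma num_links_add_link:
  "j < n \<Longrightarrow> \<not> gi j \<Longrightarrow> num_links n (gi(j := True)) = Suc (num_links n gi)"
  unfolding num_links_def by (subst linked_set_add_link) simp_all

lemma payoff_add_link:
  "j < n \<Longrightarrow> \<not> gi j \<Longrightarrow>
    payoff n U x i xi yi (gi(j := True)) = U i (xi + (x j + (\<Sum>l | l < n \<and> gi l. x l))) yi"
  unfolding payoff_def by (subst linked_set_add_link) simp_all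

lemma nash_eq_links_to_high_provider:
  assumes eq: "nash_eq n U w p k x y g"
    and U_mono: "\<And>a a' b. 0 \<le> a \<Longrightarrow> a < a' \<Longrightarrow> 0 \<le> b \<Longrightarrow> U i a b < U i a' b"
    and i: "i < n" "k \<le> x i"
    and j: "j < n" "j \<noteq> i" "k < x j"
  shows "g i j"
proof (rule ccontr)
  assume no_link: "\<not> g i j"
  have feas: "feasible n w p k l (x l) (y l) (g l)" if "l < n" for l
    using eq that unfolding nash_eq_def by blast
  let ?gi = "(g i)(j := True)"
  let ?S = "\<Sum>l | l < n \<and> g i l. x l"
  have S_nonneg: "0 \<le> ?S"
    using feas unfolding feasible_def by (auto intro: sum_nonneg)
  have "feasible n w p k i (x i - k) (y i) ?gi"
    using feas[OF i(1)] i(2) j num_links_add_link[of j n "g i", OF j(1) no_link]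
    unfolding feasible_def by (auto simp: algebra_simps)
  then have "payoff n U x i (x i - k) (y i) ?gi \<le> payoff n U x i (x i) (y i) (g i)"
    using eq i(1) unfolding nash_eq_def by blast
  moreover have "payoff n U x i (x i) (y i) (g i) < payoff n U x i (x i - k) (y i) ?gi"
    unfolding payoff_add_link[of j n "g i", OF j(1) no_link]
    unfolding payoff_def
    using U_mono[of "x i + ?S" "x i - k + (x j + ?S)" "y i"] feas[OF i(1)] S_nonneg j(3)
    unfolding feasible_def by simp
  ultimately show False
    by simp
qed

lemma nash_eq_card_high_providers_le:
  assumes eq: "nash_eq n U w p k x y g"
    and U_ok: "utility_ok (U i)"
    and k_nonneg: "0 \<le> k"
    and i: "i < n" "k < x i"
    and p_pos: "p i > 0"
  shows "real (card {j. j < n \<and> k < x j}) * k \<le> w i"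
proof -
  let ?C = "{j. j < n \<and> k < x j}"
  let ?L = "{j. j < n \<and> g i j}"
  have "?C - {i} \<subseteq> ?L"
    using nash_eq_links_to_high_provider[OF eq _ i(1) _] U_ok i
    unfolding utility_ok_def by auto
  then have "card ?C - 1 \<le> card ?L"
    using card_mono[of ?L "?C - {i}"] card_Diff_singleton[of i ?C] i by simp
  then have card_C: "real (card ?C) * k \<le> (real (card ?L) + 1) * k"
    using k_nonneg by (intro mult_right_mono) auto
  have budget: "feasible n w p k i (x i) (y i) (g i)"
    using eq i(1) unfolding nash_eq_def by blast
  then have "0 \<le> p i * y i"
    using p_pos unfolding feasible_def by simp
  with budget have "x i + real (card ?L) * k \<le> w i"
    unfolding feasible_def num_links_def by linarith
  with card_C i(2) show ?thesis
    by (simp add: algebra_simps)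
qed

theorem proposition3:
  fixes n :: "nat \<Rightarrow> nat"
    and U :: "nat \<Rightarrow> nat \<Rightarrow> real \<Rightarrow> real \<Rightarrow> real"
    and w p :: "nat \<Rightarrow> nat \<Rightarrow> real"
    and k \<omega> :: real
    and x y :: "nat \<Rightarrow> nat \<Rightarrow> real"
    and g :: "nat \<Rightarrow> nat \<Rightarrow> nat \<Rightarrow> bool"
  assumes n_lim: "filterlim n at_top sequentially"
    and k_pos: "k > 0"
    and w_pos: "\<And>m i. i < n m \<Longrightarrow> w m i > 0"
    and p_pos: "\<And>m i. i < n m \<Longrightarrow> p m i > 0"
    and U_ok: "\<And>m i. i < n m \<Longrightarrow> utility_ok (U m i)"
    and A1: "\<And>m i. i < n m \<Longrightarrow> assumption1 (U m i) (p m i)"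
    and omega_pos: "\<omega> > 0"
    and w_bound: "\<And>m i. i < n m \<Longrightarrow> w m i \<le> \<omega>"
    and eq: "\<And>m. sociable_nash_eq (n m) (U m) (w m) (p m) k (x m) (y m) (g m)"
  shows "(\<lambda>m. real (card (core (n m) k (x m) (g m))) / real (n m)) \<longlonglongrightarrow> 0"
proof -
  have core_bounded: "real (card (core (n m) k (x m) (g m))) \<le> \<omega> / k" for m
  proof (cases "\<exists>i < n m. k < x m i")
    case True
    then obtain i where "i < n m" "k < x m i" by blast
    then have "real (card {j. j < n m \<and> k < x m j}) * k \<le> \<omega>"
      using nash_eq_card_high_providers_le[of "n m" "U m" "w m" "p m" k "x m" "y m" "g m" i]
        eq[of m] U_ok p_pos w_bound[of i m] k_pos
      unfolding sociable_nash_eq_def by fastforce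
    then show ?thesis
      using k_pos omega_pos unfolding core_def by (simp add: field_simps)
  next
    case False
    then have "core (n m) k (x m) (g m) = {}"
      unfolding core_def by auto
    then show ?thesis
      using k_pos omega_pos by simp
  qed
  then have core_ratio_bounded:
    "real (card (core (n m) k (x m) (g m))) / real (n m) \<le> \<omega> / k / real (n m)" for m
    by (intro divide_right_mono) simp_all
  have "filterlim (\<lambda>m. real (n m)) at_infinity sequentially"
    using filterlim_compose[OF filterlim_real_sequentially n_lim]
    by (rule filterlim_at_top_imp_at_infinity)
  then have bound_lim: "(\<lambda>m. (\<omega> / k) / real (n m)) \<longlonglongrightarrow> 0"
    by (rule tendsto_divide_0[OF tendsto_const])
  show ?thesis
    by (rule tendsto_sandwich[OF _ _ tendsto_const bound_lim])
      (simp_all add: core_ratio_bounded del: divide_divide_eq_left)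
qed

end
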